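(* The numbers $s_k(m)$ and $s(m)$ satisfy: (i) $s(0)=1$; (ii) $s_0(1)=1$ and $s_k(1)=0$ for $k>0$; (iii) $s_0(2)=0$, $s_1(2)=1$ and $s_k(2)=0$ for $k>1$; (iv) for every integer $m\ge1$: $s_m(2^m)=1$, $$s_{m-1}(2^m)=\sum_{j=0}^{m-1}\sum_{k=0}^{m-2}s_k\big(2^m-(2^{m-1}+\dots+2^j)\big),$$ and $s_k(2^m)=0$ for $k\ne m,m-1$; (v) for every integer $m\ge1$ and $l=0,1,\dots,m-1$: $$s_m(2^m+\dots+2^l)=1+\sum_{j=l}^{m-1}\sum_{k=0}^{m-1}s_k(2^j+\dots+2^l),$$ $$s_{m-1}(2^m+\dots+2^l)=\sum_{j=0}^{m-1}\sum_{k=0}^{m-2}s_k\big((2^m+\dots+2^l)-(2^{m-1}+\dots+2^j)\big),$$ and $s_k(2^m+\dots+2^l)=0$ for $k\ne m,m-1$; (vi) for $l=2,3,\dots,m-1$ and $a_0,\dots,a_{l-2}\in\{0,1\}$ not all $0$, writing $A=a_{l-2}2^{l-2}+\dots+a_02^0$: $$s_m(2^m+\dots+2^l+A)=\sum_{k=0}^{m-1}s_k(A)+\sum_{j=l}^{m-1}\sum_{k=0}^{m-1}s_k(2^j+\dots+2^l+A),$$ $$s_{m-1}(2^m+\dots+2^l+A)=\sum_{j=0}^{m-1}\sum_{k=0}^{m-2}s_k\big((2^m+\dots+2^l+A)-(2^{m-1}+\dots+2^j)\big),$$ and $s_k(2^m+\dots+2^l+A)=0$ for $k\ne m,m-1$;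 (vii) for $m>1$ and $a_0,\dots,a_{m-2}\in\{0,1\}$ not all $0$, writing $B=a_{m-2}2^{m-2}+\dots+a_02^0$: $$s_m(2^m+B)=\sum_{k=0}^{m-1}s_k(B),$$ $$s_{m-1}(2^m+B)=\sum_{j=0}^{m-1}\sum_{k=0}^{m-2}s_k\big((2^m+B)-(2^{m-1}+\dots+2^j)\big),$$ and $s_k(2^m+B)=0$ for $k\ne m,m-1$.
   Context: For a natural number $m>0$ and $k\in\{0,1,2,\dots\}$, $S_k(m)$ is the set of all finite sequences $((m_1,l_1),\dots,(m_t,l_t))$ with $t\ge1$ of pairs of natural numbers such that $k=m_1>m_2>\dots>m_t\ge0$, $m_j\ge l_j\ge0$ for all $j$, and $m=\sum_{j=1}^t\sum_{p=0}^{l_j}2^{m_j-p}$; $s_k(m)=|S_k(m)|$. For $m>0$, $s(m)=\sum_{k\ge0}s_k(m)$ (a finite sum, since $s_k(m)=0$ for all but finitely many $k$), and $s(0)=1$ by convention. Empty sums are $0$. *)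

theory Defs
  imports Main
begin

definition S_set :: "nat \<Rightarrow> nat \<Rightarrow> (nat \<times> nat) list set" where
  "S_set k m = {ps. 0 < m \<and> ps \<noteq> [] \<and> fst (hd ps) = k
      \<and> sorted_wrt (>) (map fst ps)
      \<and> (\<forall>(a, b) \<in> set ps. b \<le> a)
      \<and> m = (\<Sum>(a, b) \<leftarrow> ps. \<Sum>p = 0..b. (2::nat) ^ (a - p))}"

definition s_k :: "nat \<Rightarrow> nat \<Rightarrow> nat" where
  "s_k k m = card (S_set k m)"

definition s :: "nat \<Rightarrow> nat" where
  "s m = (if m = 0 then 1 else (\<Sum>k \<in> {k. s_k k m \<noteq> 0}. s_k k m))"

definition gs :: "nat \<Rightarrow> nat \<Rightarrow> nat" where
  "gs a b = (\<Sum>i \<in> {b..a}. (2::nat) ^ i)"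

end

theory Submission
  imports Defs
begin

(* Splitting off the leading pair (k, b) of a sequence in S_k(X) removes the block
   2^k + ... + 2^(k-b) = gs k (k - b); what is left is empty or lies in S_k'(X - gs k (k - b))
   for some k' < k.  Since S_k(X) is empty unless
   2^k <= X < 2^(k+2), only k = m and k = m - 1 contribute when 2^m <= X < 2^(m+1).  For
   k = m - 1 no single block reaches X.  For k = m and X = gs m l + R with R < 2^(l-1), the
   blocks gs m j with j < l overshoot X, the block gs m l leaves R, and gs m (j+1) leaves
   gs j l + R. *)

lemma gs_add_pow: "b \<le> a \<Longrightarrow> gs a b + 2 ^ b = 2 ^ Suc a"
proof (induction a)
  case (Suc a)
  then show ?case
    by (cases "b = Suc a") (auto simp: gs_def le_Suc_eq)
qed (simp add: gs_def)

lemma gs_less: "gs a b < 2 ^ Suc a"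
proof (cases "b \<le> a")
  case True
  then show ?thesis
    using gs_add_pow[of b a] by (metis less_add_same_cancel1 zero_less_numeral zero_less_power)
qed (simp add: gs_def)

lemma pow_le_gs:
  assumes "b \<le> a"
  shows "2 ^ a \<le> gs a b"
proof -
  have "(2::nat) ^ b \<le> 2 ^ a"
    using assms by (simp add: power_increasing)
  moreover have "(2::nat) ^ Suc a = 2 ^ a + 2 ^ a"
    by simp
  ultimately show ?thesis
    using gs_add_pow[OF assms] by linarith
qed

lemma gs_pos: "b \<le> a \<Longrightarrow> 0 < gs a b"
  using pow_le_gs[of b a] by (meson le_trans not_le zero_less_numeral zero_less_power)

lemma gs_self: "gs a a = 2 ^ a"
  by (simp add: gs_def)

lemma gs_split:
  assumes "l < j" "j \<le> m"
  shows "gs m l = gs m j + gs (j - 1) l"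
proof -
  have "gs (j - 1) l + 2 ^ l = 2 ^ j"
    using assms gs_add_pow[of l "j - 1"] by simp
  then show ?thesis
    using assms gs_add_pow[of l m] gs_add_pow[of j m] by linarith
qed

lemma sum_pow_diff_eq_gs: "b \<le> a \<Longrightarrow> (\<Sum>p = 0..b. (2::nat) ^ (a - p)) = gs a (a - b)"
  unfolding gs_def
  by (rule sum.reindex_bij_witness[where i = "\<lambda>i. a - i" and j = "\<lambda>p. a - p"]) auto

definition admissible :: "(nat \<times> nat) list \<Rightarrow> bool" where
  "admissible ps \<longleftrightarrow> sorted_wrt (>) (map fst ps) \<and> (\<forall>(a, b) \<in> set ps. b \<le> a)"

definition weight :: "(nat \<times> nat) list \<Rightarrow> nat" where
  "weight ps = (\<Sum>(a, b) \<leftarrow> ps. \<Sum>p = 0..b. 2 ^ (a - p))"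

lemma weight_Nil [simp]: "weight [] = 0"
  by (simp add: weight_def)

lemma weight_Cons [simp]: "b \<le> a \<Longrightarrow> weight ((a, b) # ps) = gs a (a - b) + weight ps"
  by (simp add: weight_def sum_pow_diff_eq_gs)

lemma admissible_Nil [simp]: "admissible []"
  by (simp add: admissible_def)

lemma admissible_Cons:
  "admissible ((a, b) # ps) \<longleftrightarrow> b \<le> a \<and> (\<forall>c \<in> fst ` set ps. c < a) \<and> admissible ps"
  by (auto simp: admissible_def)

lemma mem_S_set_iff:
  "ps \<in> S_set k X \<longleftrightarrow> 0 < X \<and> ps \<noteq> [] \<and> fst (hd ps) = k \<and> admissible ps \<and> X = weight ps"
  by (simp add: S_set_def admissible_def weight_def)

lemma weight_less:
  "admissible ps \<Longrightarrow> \<forall>a \<in> fst ` set ps. a < n \<Longrightarrow> weight ps < 2 ^ Suc n"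
proof (induction ps arbitrary: n)
  case (Cons p ps)
  obtain a b where p: "p = (a, b)"
    by fastforce
  have "b \<le> a" "a < n" "weight ps < 2 ^ Suc a"
    using Cons by (auto simp: p admissible_Cons)
  moreover have "(2::nat) ^ Suc (Suc a) \<le> 2 ^ Suc n"
    using \<open>a < n\<close> by (intro power_increasing) simp_all
  ultimately show ?case
    using gs_less[of a "a - b"] by (simp add: p)
qed simp

lemma mem_S_set_bounds:
  assumes "ps \<in> S_set k X"
  shows "2 ^ k \<le> X" and "X < 2 ^ Suc (Suc k)"
proof -
  obtain b r where ps: "ps = (k, b) # r" and "b \<le> k" and adm: "admissible ps" and X: "X = weight ps"
    using assms by (cases ps) (auto simp: mem_S_set_iff admissible_Cons)
  then show "2 ^ k \<le> X"
    using pow_le_gs[of "k - b" k] by simp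
  have "\<forall>a \<in> fst ` set ps. a < Suc k"
    using adm by (auto simp: ps admissible_Cons)
  then show "X < 2 ^ Suc (Suc k)"
    using weight_less adm X by blast
qed

lemma s_k_eq_0_outside: "X < 2 ^ k \<or> 2 ^ Suc (Suc k) \<le> X \<Longrightarrow> s_k k X = 0"
  unfolding s_k_def using mem_S_set_bounds by (metis card.empty equals0I not_le)

lemma s_k_0 [simp]: "s_k k 0 = 0"
  by (simp add: s_k_def S_set_def)

lemma Cons_mem_S_set_iff:
  "(a, b) # r \<in> S_set k X \<longleftrightarrow> a = k \<and> b \<le> k \<and>
     (r = [] \<and> X = gs k (k - b) \<or> (\<exists>k' < k. r \<in> S_set k' (X - gs k (k - b))))"
  (is "_ \<longleftrightarrow> ?rhs")
proof
  assume "(a, b) # r \<in> S_set k X"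
  then have ak: "a = k" and bk: "b \<le> k" and X: "X = gs k (k - b) + weight r"
    and adm: "admissible r" and below: "\<forall>c \<in> fst ` set r. c < k"
    by (auto simp: mem_S_set_iff admissible_Cons)
  show ?rhs
  proof (cases r)
    case (Cons q r')
    obtain c d where q: "q = (c, d)"
      by fastforce
    have "d \<le> c"
      using adm by (simp add: Cons q admissible_Cons)
    then have "0 < weight r"
      using gs_pos[of "c - d" c] by (simp add: Cons q)
    then have "r \<in> S_set c (X - gs k (k - b))"
      using adm X by (simp add: mem_S_set_iff Cons q)
    moreover have "c < k"
      using below by (simp add: Cons q)
    ultimately show ?thesis
      using ak bk by blast
  qed (use ak bk X in simp)
next
  assume ?rhs
  then consider "a = k" "b \<le> k" "r = []" "X = gs k (k - b)"
    | k' where "a = k" "b \<le> k" "k' < k" "r \<in> S_set k' (X - gs k (k - b))"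
    by blast
  then show "(a, b) # r \<in> S_set k X"
  proof cases
    case 1
    then show ?thesis
      using gs_pos[of "k - b" k] by (auto simp: mem_S_set_iff admissible_Cons)
  next
    case 2
    then obtain q r' where r: "r = q # r'" and "fst q = k'" and "admissible r"
      and "weight r = X - gs k (k - b)" and "0 < X - gs k (k - b)"
      by (cases r) (auto simp: mem_S_set_iff)
    moreover have "\<forall>c \<in> fst ` set r. c < k"
      using \<open>admissible r\<close> \<open>fst q = k'\<close> \<open>k' < k\<close> by (auto simp: r admissible_def)
    ultimately show ?thesis
      using 2 by (auto simp: mem_S_set_iff admissible_Cons)
  qed
qed

lemma S_set_decomp:
  "S_set k X = (\<lambda>j. [(k, k - j)]) ` {j. j \<le> k \<and> gs k j = X}
     \<union> (\<Union>j\<le>k. \<Union>k'<k. (#) (k, k - j) ` S_set k' (X - gs k j))"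
  (is "_ = ?single \<union> ?longer")
proof (intro equalityI subsetI)
  fix ps
  assume ps: "ps \<in> S_set k X"
  then obtain b r where ps_eq: "ps = (k, b) # r" and bk: "b \<le> k"
    by (cases ps) (auto simp: mem_S_set_iff admissible_Cons)
  have j: "k - (k - b) = b" "k - b \<le> k"
    using bk by auto
  from ps consider "r = []" "X = gs k (k - b)" | k' where "k' < k" "r \<in> S_set k' (X - gs k (k - b))"
    by (auto simp: ps_eq Cons_mem_S_set_iff)
  then show "ps \<in> ?single \<union> ?longer"
  proof cases
    case 1
    then have "ps \<in> ?single"
      using j by (auto simp: ps_eq intro!: image_eqI[where x = "k - b"])
    then show ?thesis ..
  next
    case 2
    then have "ps \<in> (#) (k, k - (k - b)) ` S_set k' (X - gs k (k - b))"
      using j by (simp add: ps_eq)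
    then show ?thesis
      using j 2 by blast
  qed
qed (auto simp: Cons_mem_S_set_iff)

lemma finite_S_set: "finite (S_set k X)"
proof (induction k arbitrary: X rule: less_induct)
  case (less k)
  then show ?case
    by (subst S_set_decomp) auto
qed

(* Blocks overshooting X contribute nothing: then X - gs k j = 0 and s_k k' 0 = 0. *)
lemma s_k_rec:
  "s_k k X = card {j. j \<le> k \<and> gs k j = X} + (\<Sum>j\<le>k. \<Sum>k'<k. s_k k' (X - gs k j))"
proof -
  let ?hits = "{j. j \<le> k \<and> gs k j = X}"
  let ?single = "(\<lambda>j. [(k, k - j)]) ` ?hits"
  let ?longer = "\<lambda>j k'. (#) (k, k - j) ` S_set k' (X - gs k j)"
  have card_longer: "card (?longer j k') = s_k k' (X - gs k j)" for j k'
    unfolding s_k_def by (rule card_image) simp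
  have "card (\<Union>k'<k. ?longer j k') = (\<Sum>k'<k. s_k k' (X - gs k j))" for j
    by (subst card_UN_disjoint) (auto simp: finite_S_set card_longer mem_S_set_iff)
  then have "card (\<Union>j\<le>k. \<Union>k'<k. ?longer j k') = (\<Sum>j\<le>k. \<Sum>k'<k. s_k k' (X - gs k j))"
    by (subst card_UN_disjoint) (auto simp: finite_S_set)
  moreover have "card ?single = card ?hits"
    by (rule card_image) (auto simp: inj_on_def)
  moreover have "?single \<inter> (\<Union>j\<le>k. \<Union>k'<k. ?longer j k') = {}"
    by (auto simp: mem_S_set_iff)
  ultimately show ?thesis
    unfolding s_k_def by (subst S_set_decomp, subst card_Un_disjoint) (auto simp: finite_S_set)
qed

lemma gs_strict_antimono: "l < j \<Longrightarrow> j \<le> m \<Longrightarrow> gs m j < gs m l"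
  using gs_split[of l j m] gs_pos[of l "j - 1"] by simp

lemma gs_add_less_gs:
  assumes "j < l" "l \<le> m" "R < 2 ^ (l - 1)"
  shows "gs m l + R < gs m j"
proof -
  have "2 ^ (l - 1) \<le> gs (l - 1) j"
    using assms by (intro pow_le_gs) simp
  then have "R < gs (l - 1) j"
    using assms(3) by linarith
  then show ?thesis
    using assms gs_split[of j l m] by simp
qed

(* For l = 0 the bound 2^(l - 1) = 1 forces R = 0. *)
lemma s_k_gs_add:
  assumes lm: "l \<le> m" and R: "R < 2 ^ (l - 1)"
  shows "s_k m (gs m l + R) = (if R = 0 then 1 else 0) + (\<Sum>k<m. s_k k R)
           + (\<Sum>j\<in>{l..<m}. \<Sum>k<m. s_k k (gs j l + R))"
proof -
  let ?X = "gs m l + R"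
  define f where "f j = (\<Sum>k<m. s_k k (?X - gs m j))" for j
  have "j \<le> m \<and> gs m j = ?X \<longleftrightarrow> R = 0 \<and> j = l" for j
    using gs_add_less_gs[OF _ lm R, of j] gs_strict_antimono[of l j m] lm
    by (cases j l rule: linorder_cases) auto
  then have hits: "card {j. j \<le> m \<and> gs m j = ?X} = (if R = 0 then 1 else 0)"
    by simp
  have "(\<Sum>j\<le>m. f j) = (\<Sum>j\<in>{l..<Suc m}. f j)"
    using gs_add_less_gs[OF _ lm R] lm
    by (intro sum.mono_neutral_right) (fastforce simp: f_def not_le)+
  also have "\<dots> = f l + (\<Sum>j\<in>{l..<m}. f (Suc j))"
    using lm by (simp only: sum.atLeast_Suc_lessThan le_imp_less_Suc sum.atLeast_Suc_lessThan_Suc_shift comp_def)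
  also have "\<dots> = (\<Sum>k<m. s_k k R) + (\<Sum>j\<in>{l..<m}. \<Sum>k<m. s_k k (gs j l + R))"
  proof -
    have "f (Suc j) = (\<Sum>k<m. s_k k (gs j l + R))" if "l \<le> j" "j < m" for j
      using gs_split[of l "Suc j" m] that by (simp add: f_def)
    then have "(\<Sum>j\<in>{l..<m}. f (Suc j)) = (\<Sum>j\<in>{l..<m}. \<Sum>k<m. s_k k (gs j l + R))"
      by (intro sum.cong) auto
    then show ?thesis
      by (simp add: f_def)
  qed
  finally show ?thesis
    using s_k_rec[of m ?X] hits by (simp add: f_def)
qed

lemma gs_add_bounds:
  assumes "l \<le> m" "R < 2 ^ l"
  shows "2 ^ m \<le> gs m l + R" and "gs m l + R < 2 ^ Suc m"
  using pow_le_gs[OF assms(1)] gs_add_pow[OF assms(1)] assms(2) by simp_all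

lemma s_k_pred_rec:
  assumes "0 < m" "2 ^ m \<le> X"
  shows "s_k (m - 1) X = (\<Sum>j<m. \<Sum>k<m - 1. s_k k (X - gs (m - 1) j))"
proof -
  have "gs (m - 1) j < X" for j
    using gs_less[of "m - 1" j] assms by simp
  then have "{j. j \<le> m - 1 \<and> gs (m - 1) j = X} = {}"
    by blast
  moreover have "{..m - 1} = {..<m}"
    using assms(1) by auto
  ultimately show ?thesis
    using s_k_rec[of "m - 1" X] by simp
qed

lemma s_k_eq_0_off:
  assumes "2 ^ m \<le> X" "X < 2 ^ Suc m" "k \<noteq> m" "k \<noteq> m - 1"
  shows "s_k k X = 0"
proof (rule s_k_eq_0_outside)
  consider "Suc m \<le> k" | "Suc (Suc k) \<le> m"
    using assms(3,4) by linarith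
  then show "X < 2 ^ k \<or> 2 ^ Suc (Suc k) \<le> X"
  proof cases
    case 1
    then have "(2::nat) ^ Suc m \<le> 2 ^ k"
      by (rule power_increasing) simp
    then show ?thesis
      using assms(2) by linarith
  next
    case 2
    then have "(2::nat) ^ Suc (Suc k) \<le> 2 ^ m"
      by (rule power_increasing) simp
    then show ?thesis
      using assms(1) by linarith
  qed
qed

lemma s_k_dyadic_interval:
  assumes "0 < m" "2 ^ m \<le> X" "X < 2 ^ Suc m"
  shows "s_k (m - 1) X = (\<Sum>j<m. \<Sum>k<m - 1. s_k k (X - gs (m - 1) j))
    \<and> (\<forall>k. k \<noteq> m \<and> k \<noteq> m - 1 \<longrightarrow> s_k k X = 0)"
  using assms s_k_pred_rec s_k_eq_0_off by blast

lemma s_k_pow2: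
  assumes "1 \<le> m"
  shows "s_k m (2^m) = 1
    \<and> s_k (m - 1) (2^m) = (\<Sum>j<m. \<Sum>k<m - 1. s_k k (2^m - gs (m - 1) j))
    \<and> (\<forall>k. k \<noteq> m \<and> k \<noteq> m - 1 \<longrightarrow> s_k k (2^m) = 0)"
  using assms s_k_gs_add[of m m 0] s_k_dyadic_interval[of m "2 ^ m"] by (simp add: gs_self)

lemma s_k_gs:
  assumes "1 \<le> m" "l < m"
  shows "s_k m (gs m l) = 1 + (\<Sum>j\<in>{l..<m}. \<Sum>k<m. s_k k (gs j l))
    \<and> s_k (m - 1) (gs m l) = (\<Sum>j<m. \<Sum>k<m - 1. s_k k (gs m l - gs (m - 1) j))
    \<and> (\<forall>k. k \<noteq> m \<and> k \<noteq> m - 1 \<longrightarrow> s_k k (gs m l) = 0)"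
  using assms s_k_gs_add[of l m 0] s_k_dyadic_interval[of m "gs m l"] gs_add_bounds[of l m 0] by simp

lemma binary_sum_less:
  assumes "\<forall>i\<le>n. a i \<le> 1"
  shows "(\<Sum>i\<le>n. a i * 2 ^ i) < (2::nat) ^ Suc n"
proof -
  have "(\<Sum>i\<le>n. a i * 2 ^ i) \<le> (\<Sum>i\<le>n. (2::nat) ^ i)"
    using assms by (intro sum_mono) simp
  also have "\<dots> = 2 ^ Suc n - 1"
    using sum_power2[of "Suc n"] by (simp add: atLeast0LessThan lessThan_Suc_atMost)
  also have "\<dots> < 2 ^ Suc n"
    by simp
  finally show ?thesis .
qed

lemma binary_sum_pos: "\<exists>i\<le>n. a i \<noteq> 0 \<Longrightarrow> 0 < (\<Sum>i\<le>n. a i * (2::nat) ^ i)"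
  by (auto intro!: sum_pos2)

lemma s_k_gs_add_binary:
  assumes "2 \<le> l" "l < m" "\<forall>i\<le>l - 2. a i \<in> {0, 1}" "\<exists>i\<le>l - 2. a i \<noteq> 0"
  shows "let A = (\<Sum>i\<le>l - 2. a i * 2^i); X = gs m l + A in
          s_k m X = (\<Sum>k<m. s_k k A) + (\<Sum>j\<in>{l..<m}. \<Sum>k<m. s_k k (gs j l + A))
        \<and> s_k (m - 1) X = (\<Sum>j<m. \<Sum>k<m - 1. s_k k (X - gs (m - 1) j))
        \<and> (\<forall>k. k \<noteq> m \<and> k \<noteq> m - 1 \<longrightarrow> s_k k X = 0)"
proof -
  define A where "A = (\<Sum>i\<le>l - 2. a i * 2^i)"
  have pos: "0 < A"
    using binary_sum_pos[OF assms(4)] by (simp add: A_def)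
  have "\<forall>i\<le>l - 2. a i \<le> 1"
    using assms(3) by auto
  moreover have "Suc (l - 2) = l - 1"
    using assms(1) by simp
  ultimately have small: "A < 2 ^ (l - 1)"
    using binary_sum_less[of "l - 2" a] by (simp add: A_def)
  then have "A < 2 ^ l"
    by (meson diff_le_self less_le_trans one_le_numeral power_increasing)
  show ?thesis
    using pos small \<open>A < 2 ^ l\<close> assms
      s_k_gs_add[of l m A] s_k_dyadic_interval[of m "gs m l + A"] gs_add_bounds[of l m A]
    by (simp add: Let_def flip: A_def)
qed

lemma s_k_pow2_add_binary:
  assumes "1 < m" "\<forall>i\<le>m - 2. a i \<in> {0, 1}" "\<exists>i\<le>m - 2. a i \<noteq> 0"
  shows "let B = (\<Sum>i\<le>m - 2. a i * 2^i); X = 2^m + B in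
          s_k m X = (\<Sum>k<m. s_k k B)
        \<and> s_k (m - 1) X = (\<Sum>j<m. \<Sum>k<m - 1. s_k k (X - gs (m - 1) j))
        \<and> (\<forall>k. k \<noteq> m \<and> k \<noteq> m - 1 \<longrightarrow> s_k k X = 0)"
proof -
  define B where "B = (\<Sum>i\<le>m - 2. a i * 2^i)"
  have pos: "0 < B"
    using binary_sum_pos[OF assms(3)] by (simp add: B_def)
  have "\<forall>i\<le>m - 2. a i \<le> 1"
    using assms(2) by auto
  moreover have "Suc (m - 2) = m - 1"
    using assms(1) by simp
  ultimately have small: "B < 2 ^ (m - 1)"
    using binary_sum_less[of "m - 2" a] by (simp add: B_def)
  then have "B < 2 ^ m"
    by (meson diff_le_self less_le_trans one_le_numeral power_increasing)
  show ?thesis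
    using pos small \<open>B < 2 ^ m\<close> assms
      s_k_gs_add[of m m B] s_k_dyadic_interval[of m "2 ^ m + B"] gs_add_bounds[of m m B]
    by (simp add: Let_def gs_self flip: B_def)
qed

theorem theorem4p6:
  shows
  "s 0 = 1
   \<and> (s_k 0 1 = 1 \<and> (\<forall>k>0. s_k k 1 = 0))
   \<and> (s_k 0 2 = 0 \<and> s_k 1 2 = 1 \<and> (\<forall>k>1. s_k k 2 = 0))
   \<and> (\<forall>m\<ge>1.
        s_k m (2^m) = 1
      \<and> s_k (m - 1) (2^m) = (\<Sum>j<m. \<Sum>k<m - 1. s_k k (2^m - gs (m - 1) j))
      \<and> (\<forall>k. k \<noteq> m \<and> k \<noteq> m - 1 \<longrightarrow> s_k k (2^m) = 0))
   \<and> (\<forall>m\<ge>1. \<forall>l<m.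
        s_k m (gs m l) = 1 + (\<Sum>j\<in>{l..<m}. \<Sum>k<m. s_k k (gs j l))
      \<and> s_k (m - 1) (gs m l) = (\<Sum>j<m. \<Sum>k<m - 1. s_k k (gs m l - gs (m - 1) j))
      \<and> (\<forall>k. k \<noteq> m \<and> k \<noteq> m - 1 \<longrightarrow> s_k k (gs m l) = 0))
   \<and> (\<forall>m l (a :: nat \<Rightarrow> nat). 2 \<le> l \<and> l < m
        \<and> (\<forall>i\<le>l - 2. a i \<in> {0, 1}) \<and> (\<exists>i\<le>l - 2. a i \<noteq> 0) \<longrightarrow>
        (let A = (\<Sum>i\<le>l - 2. a i * 2^i); X = gs m l + A in
          s_k m X = (\<Sum>k<m. s_k k A) + (\<Sum>j\<in>{l..<m}. \<Sum>k<m. s_k k (gs j l + A))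
        \<and> s_k (m - 1) X = (\<Sum>j<m. \<Sum>k<m - 1. s_k k (X - gs (m - 1) j))
        \<and> (\<forall>k. k \<noteq> m \<and> k \<noteq> m - 1 \<longrightarrow> s_k k X = 0)))
   \<and> (\<forall>m (a :: nat \<Rightarrow> nat). 1 < m
        \<and> (\<forall>i\<le>m - 2. a i \<in> {0, 1}) \<and> (\<exists>i\<le>m - 2. a i \<noteq> 0) \<longrightarrow>
        (let B = (\<Sum>i\<le>m - 2. a i * 2^i); X = 2^m + B in
          s_k m X = (\<Sum>k<m. s_k k B)
        \<and> s_k (m - 1) X = (\<Sum>j<m. \<Sum>k<m - 1. s_k k (X - gs (m - 1) j))
        \<and> (\<forall>k. k \<noteq> m \<and> k \<noteq> m - 1 \<longrightarrow> s_k k X = 0)))"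
proof -
  have "s_k 0 1 = 1" "s_k 1 2 = 1"
    using s_k_gs_add[of 0 0 0] s_k_gs_add[of 1 1 0] by (simp_all add: gs_self)
  moreover have "s_k 0 2 = 0"
    using s_k_pred_rec[of 1 2] by simp
  moreover have "\<forall>k>0. s_k k 1 = 0" "\<forall>k>1. s_k k 2 = 0"
    using s_k_eq_0_off[of 0 1] s_k_eq_0_off[of 1 2] by auto
  ultimately show ?thesis
    using s_k_pow2 s_k_gs s_k_gs_add_binary s_k_pow2_add_binary by (simp add: s_def)
qed

end
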